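(* Let $n\ge2$, $c_1,\dots,c_{n-1}\ge0$, and for $p=1,\dots,n-1$ let $r_p\ge0$ be the largest non-negative real root of $x\mapsto Q_p(x,1)$, where $Q_p(x,y)=\frac{x^p}{p!}-\sum_{k=1}^{p}\frac{c_k}{(p-k)!}x^{p-k}y^k$. Then for each $p=1,\dots,n-2$ we have $r_p\le r_{p+1}$, with strict inequality $r_p<r_{p+1}$ whenever $r_{p+1}>0$. Equivalently, for Kähler classes $\alpha,\beta$ and factor classes $\tau_p(\alpha,\beta)=\alpha-r_p\beta$, the class $\tau_p(\alpha,\beta)-\tau_{p+1}(\alpha,\beta)$ is a non-negative multiple of $\beta$, and a strictly positive multiple whenever $\tau_{p+1}(\alpha,\beta)\ne\alpha$.
   Context: $Q_p(x,y)$ is the homogeneous degree-$p$ part of $\exp(x)(1-P(y))$ with $P(y)=\sum_{k=1}^{n-1}c_ky^k$. It factors as $(x-r_py)\tilde Q_p(x,y)$ with $\tilde Q_p$ having non-negative coefficients; $\tau_p(\alpha,\beta):=\alpha-r_p\beta$ is the factor class at dimension $p$. *)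

theory Defs
  imports Complex_Main
begin

definition Qp1 :: "(nat \<Rightarrow> real) \<Rightarrow> nat \<Rightarrow> real \<Rightarrow> real" where
  "Qp1 c p x = x ^ p / fact p - (\<Sum>k=1..p. c k / fact (p - k) * x ^ (p - k))"

definition rp :: "(nat \<Rightarrow> real) \<Rightarrow> nat \<Rightarrow> real" where
  "rp c p = (GREATEST x. x \<ge> 0 \<and> Qp1 c p x = 0)"

end

theory Submission imports Defs begin

text \<open>
  Differentiating term by term gives \<open>Q\<^sub>p\<^sub>+\<^sub>1' = Q\<^sub>p\<close> and \<open>Q\<^sub>p\<^sub>+\<^sub>1(0) = -c\<^sub>p\<^sub>+\<^sub>1 \<le> 0\<close>.
  By induction on \<open>p\<close>, \<open>Q\<^sub>p\<close> is \<open>\<le> 0\<close> on \<open>[0, r\<^sub>p]\<close>, positive and nondecreasing on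
  \<open>(r\<^sub>p, \<infinity>)\<close>. Hence \<open>Q\<^sub>p\<^sub>+\<^sub>1\<close> decreases on \<open>[0, r\<^sub>p]\<close> starting from a non-positive value,
  then increases strictly and without bound, so its largest root \<open>r\<^sub>p\<^sub>+\<^sub>1\<close> lies in
  \<open>[r\<^sub>p, \<infinity>)\<close> and the profile propagates. If \<open>r\<^sub>p\<^sub>+\<^sub>1 = r\<^sub>p > 0\<close>, then \<open>Q\<^sub>p\<^sub>+\<^sub>1\<close> would
  vanish identically on \<open>[0, r\<^sub>p]\<close>, which is impossible since its \<open>p+1\<close>-st derivative
  is \<open>Q\<^sub>0 = 1\<close>.
\<close>

lemma Qp1_0 [simp]: "Qp1 c 0 x = 1"
  by (simp add: Qp1_def)

lemma Qp1_1: "Qp1 c (Suc 0) x = x - c (Suc 0)"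
  by (simp add: Qp1_def)

lemma Qp1_Suc:
  "Qp1 c (Suc p) x =
     x ^ Suc p / fact (Suc p) - (\<Sum>k=1..p. c k * (x ^ Suc (p - k) / fact (Suc (p - k)))) - c (Suc p)"
proof -
  have "(\<Sum>k=1..p. c k / fact (Suc p - k) * x ^ (Suc p - k)) =
        (\<Sum>k=1..p. c k * (x ^ Suc (p - k) / fact (Suc (p - k))))"
    by (rule sum.cong) (auto simp: Suc_diff_le)
  then show ?thesis
    unfolding Qp1_def by simp
qed

lemma has_real_derivative_power_over_fact:
  "((\<lambda>x::real. x ^ Suc m / fact (Suc m)) has_real_derivative x ^ m / fact m) (at x)"
proof -
  have "((\<lambda>x::real. x ^ Suc m / fact (Suc m)) has_real_derivative real (Suc m) * x ^ m / fact (Suc m)) (at x)"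
    using DERIV_divide[OF DERIV_pow[of "Suc m" x] DERIV_const[of "fact (Suc m)" "at x"]] by simp
  moreover have "real (Suc m) * x ^ m / fact (Suc m) = x ^ m / fact m"
    by (simp add: fact_Suc del: of_nat_Suc)
  ultimately show ?thesis by simp
qed

lemma Qp1_Suc_has_real_derivative: "(Qp1 c (Suc p) has_real_derivative Qp1 c p x) (at x)"
proof -
  have "((\<lambda>x. x ^ Suc p / fact (Suc p) - (\<Sum>k=1..p. c k * (x ^ Suc (p - k) / fact (Suc (p - k))))
              - c (Suc p))
         has_real_derivative x ^ p / fact p - (\<Sum>k=1..p. c k * (x ^ (p - k) / fact (p - k))) - 0) (at x)"
    by (intro derivative_intros has_real_derivative_power_over_fact DERIV_cmult)
  then show ?thesis
    unfolding Qp1_Suc [abs_def] by (simp add: Qp1_def field_simps)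
qed

lemma continuous_on_Qp1: "continuous_on S (Qp1 c (Suc p))"
  by (rule continuous_at_imp_continuous_on) (use DERIV_isCont[OF Qp1_Suc_has_real_derivative] in blast)

lemma Qp1_not_constant_zero:
  assumes "a < b"
  shows "\<exists>x. a < x \<and> x < b \<and> Qp1 c q x \<noteq> 0"
proof (induction q)
  case 0
  show ?case using assms by (intro exI[of _ "(a + b) / 2"]) auto
next
  case (Suc q)
  then obtain x where x: "a < x" "x < b" "Qp1 c q x \<noteq> 0"
    by blast
  show ?case
  proof (rule ccontr)
    assume zero: "\<not> ?case"
    have "(Qp1 c (Suc q) has_real_derivative 0) (at x)"
      by (rule has_field_derivative_transform_within_open[where S="{a<..<b}" and f="\<lambda>_. 0"])
         (use x zero in auto)
    then show False
      using x DERIV_unique[OF Qp1_Suc_has_real_derivative] by blast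
  qed
qed

text \<open>The shape of \<open>Q\<^sub>p(\<cdot>, 1)\<close> on \<open>[0, \<infinity>)\<close> that is preserved from \<open>p\<close> to \<open>p + 1\<close>.\<close>

definition root_profile :: "(nat \<Rightarrow> real) \<Rightarrow> nat \<Rightarrow> real \<Rightarrow> bool" where
  "root_profile c p s \<longleftrightarrow> s \<ge> 0 \<and> Qp1 c p s = 0 \<and>
     (\<forall>x. 0 \<le> x \<and> x \<le> s \<longrightarrow> Qp1 c p x \<le> 0) \<and>
     (\<forall>x>s. Qp1 c p x > 0) \<and>
     (\<forall>x y. s \<le> x \<and> x \<le> y \<longrightarrow> Qp1 c p x \<le> Qp1 c p y)"

lemma root_profile_imp_rp:
  assumes "root_profile c p s"
  shows "rp c p = s"
  unfolding rp_def
proof (rule Greatest_equality)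
  show "0 \<le> s \<and> Qp1 c p s = 0"
    using assms by (simp add: root_profile_def)
  show "y \<le> s" if "0 \<le> y \<and> Qp1 c p y = 0" for y
  proof (rule ccontr)
    assume "\<not> y \<le> s"
    then have "Qp1 c p y > 0"
      using assms by (simp add: root_profile_def)
    then show False
      using that by simp
  qed
qed

lemma root_profile_1: "c 1 \<ge> 0 \<Longrightarrow> root_profile c 1 (c 1)"
  by (simp add: root_profile_def Qp1_1)

context
  fixes c :: "nat \<Rightarrow> real" and p :: nat and s :: real
  assumes profile: "root_profile c p s"
begin

lemma Qp1_Suc_antimono_below:
  assumes "0 \<le> x" "x \<le> y" "y \<le> s"
  shows "Qp1 c (Suc p) y \<le> Qp1 c (Suc p) x"
proof (rule DERIV_nonpos_imp_nonincreasing[OF assms(2)])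
  fix t assume "x \<le> t" "t \<le> y"
  then have "Qp1 c p t \<le> 0"
    using profile assms unfolding root_profile_def by auto
  then show "\<exists>l. DERIV (Qp1 c (Suc p)) t :> l \<and> l \<le> 0"
    using Qp1_Suc_has_real_derivative by blast
qed

lemma Qp1_Suc_strict_mono_above:
  assumes "s \<le> x" "x < y"
  shows "Qp1 c (Suc p) x < Qp1 c (Suc p) y"
proof (rule DERIV_pos_imp_increasing_open[OF assms(2)])
  fix t assume "x < t" "t < y"
  then have "Qp1 c p t > 0"
    using profile assms unfolding root_profile_def by auto
  then show "\<exists>l. DERIV (Qp1 c (Suc p)) t :> l \<and> l > 0"
    using Qp1_Suc_has_real_derivative by blast
qed (rule continuous_on_Qp1)

text \<open>Beyond \<open>s + 1\<close> the slope of \<open>Q\<^sub>p\<^sub>+\<^sub>1\<close> is at least \<open>d = Q\<^sub>p(s + 1) > 0\<close>.\<close>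

lemma Qp1_Suc_eventually_pos: "\<exists>y>s. Qp1 c (Suc p) y > 0"
proof -
  let ?f = "Qp1 c (Suc p)"
  define d where "d = Qp1 c p (s + 1)"
  have d: "d > 0"
    using profile by (simp add: d_def root_profile_def)
  define y where "y = s + 1 + (\<bar>?f (s + 1)\<bar> + 1) / d"
  have y: "y > s + 1"
    unfolding y_def using d by (simp add: field_simps)
  obtain z where z: "s + 1 < z" "z < y" "?f y - ?f (s + 1) = (y - (s + 1)) * Qp1 c p z"
    using MVT2[OF y, of ?f "Qp1 c p"] Qp1_Suc_has_real_derivative by blast
  have "d \<le> Qp1 c p z"
    using profile z by (simp add: d_def root_profile_def)
  then have "(y - (s + 1)) * d \<le> (y - (s + 1)) * Qp1 c p z"
    using y by (intro mult_left_mono) auto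
  moreover have "(y - (s + 1)) * d = \<bar>?f (s + 1)\<bar> + 1"
    unfolding y_def using d by simp
  ultimately show ?thesis
    using y z(3) by (intro exI[of _ y]) linarith
qed

lemma Qp1_Suc_root_at_s_imp_zero:
  assumes c: "c (Suc p) \<ge> 0" and root: "Qp1 c (Suc p) s = 0"
  shows "s = 0"
proof -
  let ?f = "Qp1 c (Suc p)"
  have "?f x = 0" if "0 < x" "x < s" for x
  proof (rule antisym)
    show "?f x \<le> 0"
      using Qp1_Suc_antimono_below[of 0 x] that c by (simp add: Qp1_Suc)
    show "0 \<le> ?f x"
      using Qp1_Suc_antimono_below[of x s] that root by simp
  qed
  then show "s = 0"
    using Qp1_not_constant_zero[of 0 s c "Suc p"] profile by (force simp: root_profile_def)
qed

lemma root_profile_Suc: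
  assumes c: "c (Suc p) \<ge> 0"
  obtains s' where "root_profile c (Suc p) s'" "s \<le> s'" "s' > 0 \<Longrightarrow> s < s'"
proof -
  let ?f = "Qp1 c (Suc p)"
  have s: "s \<ge> 0"
    using profile by (simp add: root_profile_def)
  have f0: "?f 0 \<le> 0"
    using c by (simp add: Qp1_Suc)
  obtain b where b: "b > s" "?f b > 0"
    using Qp1_Suc_eventually_pos by blast
  obtain s' where s': "s \<le> s'" "?f s' = 0"
    using IVT'[of ?f s 0 b] Qp1_Suc_antimono_below[OF order_refl s order_refl] f0 b continuous_on_Qp1
    by fastforce
  have "root_profile c (Suc p) s'"
    unfolding root_profile_def
  proof (intro conjI allI impI)
    show "0 \<le> s'" "?f s' = 0"
      using s s' by auto
    show "?f x \<le> 0" if "0 \<le> x \<and> x \<le> s'" for x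
    proof (cases "x \<le> s")
      case True
      then show ?thesis using that Qp1_Suc_antimono_below[of 0 x] f0 by linarith
    next
      case False
      then show ?thesis using that s' Qp1_Suc_strict_mono_above[of x s'] by force
    qed
    show "?f x > 0" if "s' < x" for x
      using that s' Qp1_Suc_strict_mono_above[of s' x] by auto
    show "?f x \<le> ?f y" if "s' \<le> x \<and> x \<le> y" for x y
      using that s' Qp1_Suc_strict_mono_above[of x y] by (cases "x = y") auto
  qed
  moreover have "s < s'" if "s' > 0"
    using Qp1_Suc_root_at_s_imp_zero[OF c] s' that by (cases "s = s'") auto
  ultimately show ?thesis
    using s' that by blast
qed

end

lemma root_profile_exists:
  assumes "1 \<le> p" "\<And>k. 1 \<le> k \<Longrightarrow> k \<le> p \<Longrightarrow> c k \<ge> 0"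
  shows "\<exists>s. root_profile c p s"
  using assms
proof (induction p rule: dec_induct)
  case base
  then show ?case using root_profile_1 by auto
next
  case (step m)
  then obtain s where "root_profile c m s"
    by auto
  then show ?case
    using root_profile_Suc[of c m s] step.prems step.hyps by (metis le_SucI order_refl)
qed

theorem lemma5p4:
  fixes n :: nat and c :: "nat \<Rightarrow> real"
  assumes "n \<ge> 2"
    and "\<And>k. 1 \<le> k \<Longrightarrow> k \<le> n - 1 \<Longrightarrow> c k \<ge> 0"
  shows "\<forall>p. 1 \<le> p \<and> p \<le> n - 2 \<longrightarrow>
           rp c p \<le> rp c (Suc p) \<and> (rp c (Suc p) > 0 \<longrightarrow> rp c p < rp c (Suc p))"
proof (intro allI impI)
  fix p assume p: "1 \<le> p \<and> p \<le> n - 2"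
  then obtain s where s: "root_profile c p s"
    using root_profile_exists[of p c] assms by fastforce
  have c: "c (Suc p) \<ge> 0"
    using assms p by auto
  obtain s' where s': "root_profile c (Suc p) s'" "s \<le> s'" "s' > 0 \<Longrightarrow> s < s'"
    using root_profile_Suc[OF s c] by blast
  then show "rp c p \<le> rp c (Suc p) \<and> (rp c (Suc p) > 0 \<longrightarrow> rp c p < rp c (Suc p))"
    using s s' root_profile_imp_rp by metis
qed

end
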